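(* Let $(\mathcal Q,d)$ be a metric space, $Y$ a $\mathcal Q$-valued random variable, $o\in\mathcal Q$, and $\tau\in\mathcal S_0^+$ with $\mathbb E[\tau'(d(Y,o))]<\infty$. Fix $p\in\mathcal Q$. (i) If $\operatorname{diam}(\mathcal Q)=\infty$, then $$\liminf_{r\to\infty}\inf_{q\in\mathcal Q\setminus B(o,r)}\frac{\mathbb E[\tau(d(Y,q))-\tau(d(Y,p))]}{\tau(d(q,p))}=\limsup_{r\to\infty}\sup_{q\in\mathcal Q\setminus B(o,r)}\frac{\mathbb E[\tau(d(Y,q))-\tau(d(Y,p))]}{\tau(d(q,p))}=1.$$ (ii) If $p$ is an accumulation point of $\mathcal Q$, then $$\limsup_{r\to0}\sup_{q\in B(p,r)\setminus\{p\}}\frac{\mathbb E[\tau(d(Y,q))-\tau(d(Y,p))]}{d(q,p)}\le\mathbb E[\tau'(d(Y,p))].$$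
   Context: $\mathcal S$ is the set of nondecreasing convex $\tau:[0,\infty)\to\mathbb R$, differentiable on $(0,\infty)$ with concave derivative $\tau'$, with $\tau'(0):=\lim_{x\searrow0}\tau'(x)$; $\mathcal S_0^+$ is the set of $\tau\in\mathcal S$ with $\tau(0)=0$ and $\tau'(x)>0$ for all $x>0$. $B(p,r):=\{q\in\mathcal Q: d(q,p)<r\}$ is the open ball and $\operatorname{diam}(\mathcal Q)=\sup_{q,p}d(q,p)$. $\mathcal Q$ carries its Borel $\sigma$-algebra. *)

theory Defs
  imports "HOL-Analysis.Analysis" "HOL-Probability.Probability"
begin

definition S_class :: "(real \<Rightarrow> real) set" where
  "S_class = {\<tau>. mono_on {0..} \<tau> \<and> convex_on {0..} \<tau>
      \<and> (\<forall>x>0. \<tau> differentiable at x) \<and> concave_on {0<..} (deriv \<tau>)}"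

definition tau_deriv :: "(real \<Rightarrow> real) \<Rightarrow> real \<Rightarrow> real" where
  "tau_deriv \<tau> x = (if x = 0 then Lim (at_right 0) (deriv \<tau>) else deriv \<tau> x)"

definition S0_plus :: "(real \<Rightarrow> real) set" where
  "S0_plus = {\<tau>\<in>S_class. \<tau> 0 = 0 \<and> (\<forall>x>0. tau_deriv \<tau> x > 0)}"

end

theory Submission
  imports Defs
begin

text \<open>Write \<open>a = d(Y,q)\<close>, \<open>b = d(Y,p)\<close>, \<open>D = d(q,p)\<close>. Concavity and positivity of \<open>\<tau>'\<close> make it
  nondecreasing and subadditive, so \<open>\<bar>\<tau> a - \<tau> b\<bar> \<le> D (\<tau>'(b) + \<tau>'(D))\<close> and the moment condition at \<open>o\<close>
  makes every expectation finite. For (i), the triangle inequality \<open>\<bar>a - D\<bar> \<le> b\<close> gives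
  \<open>\<bar>\<tau> a - \<tau> b - \<tau> D\<bar> \<le> b (\<tau>'(D) + \<tau>'(b))\<close>; since \<open>D \<tau>'(D) \<le> 4 \<tau>(D)\<close> and \<open>\<tau>(D) \<ge> D \<tau>(1)\<close>, this is
  \<open>o(\<tau>(D))\<close> pointwise, while the Lipschitz bound dominates it by an integrable multiple of \<open>\<tau>(D)\<close>;
  dominated convergence yields that the ratio tends to 1 as \<open>D \<rightarrow> \<infinity>\<close>, uniformly outside large balls.
  For (ii), \<open>\<tau> a - \<tau> b \<le> D \<tau>'(b + D)\<close>, and right continuity of \<open>\<tau>'\<close> with dominated convergence
  gives \<open>E[\<tau>'(b + r)] \<rightarrow> E[\<tau>'(b)]\<close> as \<open>r \<rightarrow> 0\<close>.\<close>

locale S0_plus_function =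
  fixes \<tau> :: "real \<Rightarrow> real"
  assumes S0_plus: "\<tau> \<in> S0_plus"
begin

lemma tau_mono: "0 \<le> x \<Longrightarrow> x \<le> y \<Longrightarrow> \<tau> x \<le> \<tau> y"
  using S0_plus by (auto simp: S0_plus_def S_class_def mono_on_def)

lemma tau_0 [simp]: "\<tau> 0 = 0"
  using S0_plus by (simp add: S0_plus_def)

lemma tau_nonneg: "0 \<le> x \<Longrightarrow> 0 \<le> \<tau> x"
  using tau_mono[of 0 x] by simp

lemma tau_convex: "convex_on {0..} \<tau>"
  using S0_plus by (simp add: S0_plus_def S_class_def)

lemma deriv_concave: "concave_on {0<..} (deriv \<tau>)"
  using S0_plus by (simp add: S0_plus_def S_class_def)

lemma tau_has_deriv: "0 < x \<Longrightarrow> (\<tau> has_real_derivative deriv \<tau> x) (at x)"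
  using S0_plus by (auto simp: S0_plus_def S_class_def DERIV_deriv_iff_real_differentiable)

lemma deriv_pos: "0 < x \<Longrightarrow> 0 < deriv \<tau> x"
  using S0_plus by (auto simp: S0_plus_def tau_deriv_def)

lemma tau_above_tangent: "0 < x \<Longrightarrow> 0 \<le> y \<Longrightarrow> deriv \<tau> x * (y - x) \<le> \<tau> y - \<tau> x"
  by (rule convex_on_imp_above_tangent[OF tau_convex])
    (auto intro: has_field_derivative_at_within tau_has_deriv)

lemma deriv_mono:
  assumes "0 < x" "x \<le> y" shows "deriv \<tau> x \<le> deriv \<tau> y"
proof -
  have "deriv \<tau> x * (y - x) \<le> \<tau> y - \<tau> x" "deriv \<tau> y * (x - y) \<le> \<tau> x - \<tau> y"
    using tau_above_tangent assms by auto
  then have "0 \<le> (deriv \<tau> y - deriv \<tau> x) * (y - x)" by (simp add: algebra_simps)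
  then show ?thesis using assms by (cases "x = y") (auto simp: zero_le_mult_iff)
qed

lemma tau_pos:
  assumes "0 < x" shows "0 < \<tau> x"
proof -
  have "0 < deriv \<tau> (x/2) * (x - x/2)" using deriv_pos assms by simp
  also have "\<dots> \<le> \<tau> x - \<tau> (x/2)" using tau_above_tangent[of "x/2" x] assms by simp
  finally show ?thesis using tau_nonneg[of "x/2"] assms by simp
qed

lemma deriv_tendsto_tau_deriv_0: "(deriv \<tau> \<longlongrightarrow> tau_deriv \<tau> 0) (at_right 0)"
proof -
  have "(deriv \<tau> \<longlongrightarrow> Inf (deriv \<tau> ` ({0<..} \<inter> UNIV))) (at_right 0)"
    using Lim_right_bound[of UNIV 0 "deriv \<tau>" 0] deriv_mono deriv_pos by (simp add: less_imp_le)
  then show ?thesis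
    unfolding tau_deriv_def by (simp add: tendsto_Lim)
qed

lemma tau_deriv_eq_deriv: "0 < x \<Longrightarrow> tau_deriv \<tau> x = deriv \<tau> x"
  by (simp add: tau_deriv_def)

lemma tau_deriv_0_le:
  assumes "0 < y" shows "tau_deriv \<tau> 0 \<le> deriv \<tau> y"
  using deriv_tendsto_tau_deriv_0
  by (rule tendsto_upperbound)
    (use eventually_at_right_real[OF assms] deriv_mono in \<open>auto elim!: eventually_mono\<close>)

lemma tau_deriv_nonneg:
  assumes "0 \<le> x" shows "0 \<le> tau_deriv \<tau> x"
proof (cases "x = 0")
  case True
  have "\<forall>\<^sub>F y in at_right 0. 0 \<le> deriv \<tau> y"
    using eventually_at_right_less[of 0] by eventually_elim (simp add: deriv_pos less_imp_le)
  with deriv_tendsto_tau_deriv_0 True show ?thesis by (auto intro: tendsto_lowerbound)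
qed (use assms deriv_pos tau_deriv_eq_deriv in \<open>auto simp: less_imp_le\<close>)

lemma tau_deriv_mono: "0 \<le> x \<Longrightarrow> x \<le> y \<Longrightarrow> tau_deriv \<tau> x \<le> tau_deriv \<tau> y"
  using deriv_mono tau_deriv_0_le tau_deriv_eq_deriv
  by (cases "x = 0"; cases "y = 0") auto

text \<open>That is, \<open>\<tau>'(x)/x\<close> is nonincreasing: compare \<open>\<tau>'(x)\<close> with the chord of the concave \<open>\<tau>'\<close> from \<open>s\<close>
  to \<open>z\<close>, then let \<open>s \<rightarrow> 0\<close>.\<close>
lemma deriv_scaled_le:
  assumes "0 < x" "x \<le> z" shows "x * deriv \<tau> z \<le> z * deriv \<tau> x"
proof -
  have chord: "(x - s) * deriv \<tau> z \<le> z * deriv \<tau> x" if s: "0 < s" "s < x" for s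
  proof -
    define t where "t = (x - s) / (z - s)"
    have zs: "0 < z - s" using s assms by simp
    have t: "0 \<le> t" "t \<le> 1" "t * (z - s) = x - s"
      using s assms zs by (simp_all add: t_def pos_divide_le_eq)
    then have "x = (1 - t) *\<^sub>R s + t *\<^sub>R z" by (simp add: algebra_simps)
    then have "(1 - t) * deriv \<tau> s + t * deriv \<tau> z \<le> deriv \<tau> x"
      using concave_onD[OF deriv_concave t(1,2), of s z] s assms by simp
    moreover have "0 \<le> (1 - t) * deriv \<tau> s" using t s deriv_pos by (simp add: less_imp_le)
    ultimately have "t * deriv \<tau> z * (z - s) \<le> deriv \<tau> x * (z - s)"
      using zs by (intro mult_right_mono) auto
    then have "(x - s) * deriv \<tau> z \<le> deriv \<tau> x * (z - s)"
      by (metis t(3) mult.assoc mult.commute)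
    also have "\<dots> \<le> z * deriv \<tau> x"
      using s deriv_pos[OF assms(1)] by (simp add: algebra_simps)
    finally show ?thesis .
  qed
  have "((\<lambda>s. (x - s) * deriv \<tau> z) \<longlongrightarrow> (x - 0) * deriv \<tau> z) (at_right 0)"
    by (intro tendsto_intros)
  moreover have "\<forall>\<^sub>F s in at_right 0. (x - s) * deriv \<tau> z \<le> z * deriv \<tau> x"
    using eventually_at_right_real[OF assms(1)] by eventually_elim (rule chord; simp)
  ultimately show ?thesis by (intro tendsto_upperbound) auto
qed

lemma tau_deriv_subadditive:
  assumes "0 \<le> x" "0 \<le> y" shows "tau_deriv \<tau> (x + y) \<le> tau_deriv \<tau> x + tau_deriv \<tau> y"
proof (cases "x = 0 \<or> y = 0")
  case True
  then show ?thesis using tau_deriv_nonneg[of x] tau_deriv_nonneg[of y] assms by (elim disjE) simp_all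
next
  case False
  then have pos: "0 < x" "0 < y" using assms by auto
  have "x * deriv \<tau> (x + y) \<le> (x + y) * deriv \<tau> x" "y * deriv \<tau> (x + y) \<le> (x + y) * deriv \<tau> y"
    using deriv_scaled_le[of x "x + y"] deriv_scaled_le[of y "x + y"] pos by simp_all
  then have "(x + y) * deriv \<tau> (x + y) \<le> (x + y) * (deriv \<tau> x + deriv \<tau> y)"
    by (simp add: distrib_left distrib_right)
  then have "deriv \<tau> (x + y) \<le> deriv \<tau> x + deriv \<tau> y"
    using pos by (simp add: mult_le_cancel_left_pos)
  then show ?thesis using pos by (simp add: tau_deriv_eq_deriv)
qed

lemma tau_deriv_right_continuous:
  assumes "0 \<le> b" shows "(tau_deriv \<tau> \<longlongrightarrow> tau_deriv \<tau> b) (at_right b)"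
proof -
  have "\<forall>\<^sub>F x in at_right b. deriv \<tau> x = tau_deriv \<tau> x"
    using eventually_at_right_less[of b] by eventually_elim (use assms in \<open>simp add: tau_deriv_eq_deriv\<close>)
  moreover have "(deriv \<tau> \<longlongrightarrow> tau_deriv \<tau> b) (at_right b)"
  proof (cases "b = 0")
    case False
    have "continuous_on {0<..} (\<lambda>x. - deriv \<tau> x)"
      using deriv_concave by (intro convex_on_continuous) (auto simp: concave_on_def)
    then have "continuous_on {0<..} (deriv \<tau>)"
      using continuous_on_minus by fastforce
    then have "isCont (deriv \<tau>) b"
      using False assms by (simp add: continuous_on_eq_continuous_at)
    then show ?thesis
      using False assms by (simp add: isCont_def filterlim_at_split tau_deriv_eq_deriv)
  qed (use deriv_tendsto_tau_deriv_0 in simp)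
  ultimately show ?thesis by (rule tendsto_cong[THEN iffD1])
qed

lemma tau_increment_le:
  assumes "0 \<le> x" "x \<le> y" shows "\<tau> y - \<tau> x \<le> (y - x) * tau_deriv \<tau> y"
proof (cases "y = 0")
  case False
  then have "0 < y" using assms by simp
  then have "deriv \<tau> y * (x - y) \<le> \<tau> x - \<tau> y" using tau_above_tangent assms by simp
  moreover have "(y - x) * deriv \<tau> y = - (deriv \<tau> y * (x - y))" by (simp add: algebra_simps)
  ultimately show ?thesis using \<open>0 < y\<close> by (simp add: tau_deriv_eq_deriv)
qed (use assms in simp)

lemma tau_ge_linear:
  assumes "1 \<le> D" shows "D * \<tau> 1 \<le> \<tau> D"
proof -
  have "\<tau> ((1 - 1/D) *\<^sub>R 0 + (1/D) *\<^sub>R D) \<le> (1 - 1/D) * \<tau> 0 + (1/D) * \<tau> D"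
    using convex_onD[OF tau_convex, of "1/D" 0 D] assms by simp
  then have "\<tau> 1 \<le> \<tau> D / D" using assms by simp
  then show ?thesis using assms by (simp add: le_divide_eq mult.commute)
qed

lemma tau_deriv_le_tau:
  assumes "0 < D" shows "D * tau_deriv \<tau> D \<le> 4 * \<tau> D"
proof -
  have half: "tau_deriv \<tau> (D/2) = deriv \<tau> (D/2)" using assms by (simp add: tau_deriv_eq_deriv)
  have "tau_deriv \<tau> D \<le> 2 * deriv \<tau> (D/2)"
    using tau_deriv_subadditive[of "D/2" "D/2"] assms by (simp add: half)
  then have "D * tau_deriv \<tau> D \<le> D * (2 * deriv \<tau> (D/2))"
    using assms by (intro mult_left_mono) auto
  also have "\<dots> = 4 * (deriv \<tau> (D/2) * (D - D/2))" by (simp add: algebra_simps)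
  also have "\<dots> \<le> 4 * (\<tau> D - \<tau> (D/2))"
    using tau_above_tangent[of "D/2" D] assms by (intro mult_left_mono) auto
  also have "\<dots> \<le> 4 * \<tau> D" using tau_nonneg[of "D/2"] assms by simp
  finally show ?thesis .
qed

lemma tau_increase_le:
  assumes "0 \<le> a" "0 \<le> b" "\<bar>a - b\<bar> \<le> D" shows "\<tau> a - \<tau> b \<le> D * tau_deriv \<tau> (b + D)"
proof (cases "b \<le> a")
  case True
  have "\<tau> a - \<tau> b \<le> (a - b) * tau_deriv \<tau> a" using tau_increment_le True assms by simp
  also have "\<dots> \<le> D * tau_deriv \<tau> (b + D)"
    using assms tau_deriv_mono[of a "b + D"] tau_deriv_nonneg[of a] by (intro mult_mono) auto
  finally show ?thesis .
next
  case False
  have "0 \<le> D * tau_deriv \<tau> (b + D)" using tau_deriv_nonneg[of "b + D"] assms by simp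
  then show ?thesis using tau_mono[of a b] False assms by simp
qed

lemma tau_decrease_le:
  assumes "0 \<le> a" "0 \<le> b" "\<bar>a - b\<bar> \<le> D" shows "\<tau> b - \<tau> a \<le> D * tau_deriv \<tau> b"
proof (cases "a \<le> b")
  case True
  have "\<tau> b - \<tau> a \<le> (b - a) * tau_deriv \<tau> b" using tau_increment_le True assms by simp
  also have "\<dots> \<le> D * tau_deriv \<tau> b" using assms tau_deriv_nonneg[of b] by (intro mult_right_mono) auto
  finally show ?thesis .
next
  case False
  have "0 \<le> D * tau_deriv \<tau> b" using tau_deriv_nonneg[of b] assms by simp
  then show ?thesis using tau_mono[of b a] False assms by linarith
qed

lemma abs_tau_diff_le:
  assumes "0 \<le> a" "0 \<le> b" "\<bar>a - b\<bar> \<le> D"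
  shows "\<bar>\<tau> a - \<tau> b\<bar> \<le> D * (tau_deriv \<tau> b + tau_deriv \<tau> D)"
proof -
  have D: "0 \<le> D" "0 \<le> tau_deriv \<tau> D" using assms tau_deriv_nonneg by auto
  have "D * tau_deriv \<tau> (b + D) \<le> D * (tau_deriv \<tau> b + tau_deriv \<tau> D)"
    using tau_deriv_subadditive[of b D] D assms by (intro mult_left_mono) auto
  moreover have "D * tau_deriv \<tau> b \<le> D * (tau_deriv \<tau> b + tau_deriv \<tau> D)"
    using D by (intro mult_left_mono) auto
  ultimately show ?thesis using tau_increase_le[OF assms] tau_decrease_le[OF assms] by linarith
qed

lemma abs_tau_defect_le:
  assumes "0 \<le> a" "0 \<le> b" "0 \<le> D" "\<bar>a - D\<bar> \<le> b"
  shows "\<bar>\<tau> a - \<tau> b - \<tau> D\<bar> \<le> b * (tau_deriv \<tau> D + tau_deriv \<tau> b)"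
proof -
  have "\<tau> a - \<tau> D \<le> b * tau_deriv \<tau> (D + b)" using tau_increase_le[of a D b] assms by simp
  also have "\<dots> \<le> b * (tau_deriv \<tau> D + tau_deriv \<tau> b)"
    using tau_deriv_subadditive[of D b] assms by (intro mult_left_mono) auto
  finally have up: "\<tau> a - \<tau> D \<le> b * (tau_deriv \<tau> D + tau_deriv \<tau> b)" .
  have "\<tau> D - \<tau> a \<le> b * tau_deriv \<tau> D" using tau_decrease_le[of a D b] assms by simp
  moreover have "\<tau> b \<le> b * tau_deriv \<tau> b" using tau_increment_le[of 0 b] assms by simp
  moreover have "b * (tau_deriv \<tau> D + tau_deriv \<tau> b) = b * tau_deriv \<tau> D + b * tau_deriv \<tau> b"
    by (rule distrib_left)
  ultimately show ?thesis using up tau_nonneg[of b] assms unfolding abs_le_iff by linarith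
qed

definition defect_bound :: "real \<Rightarrow> real \<Rightarrow> real" where
  "defect_bound D b = min (b * (tau_deriv \<tau> D + tau_deriv \<tau> b)) (D * (tau_deriv \<tau> b + tau_deriv \<tau> D) + \<tau> D)"

lemma abs_tau_defect_le_defect_bound:
  assumes "0 \<le> a" "0 \<le> b" "0 \<le> D" "\<bar>a - b\<bar> \<le> D" "\<bar>a - D\<bar> \<le> b"
  shows "\<bar>\<tau> a - \<tau> b - \<tau> D\<bar> \<le> defect_bound D b"
  unfolding defect_bound_def
proof (rule min.boundedI)
  show "\<bar>\<tau> a - \<tau> b - \<tau> D\<bar> \<le> D * (tau_deriv \<tau> b + tau_deriv \<tau> D) + \<tau> D"
    using abs_tau_diff_le[of a b D] tau_nonneg[of D] assms by linarith
qed (rule abs_tau_defect_le[OF assms(1-3,5)])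

lemma defect_bound_le: "defect_bound D b \<le> b * (tau_deriv \<tau> D + tau_deriv \<tau> b)"
  and defect_bound_le': "defect_bound D b \<le> D * (tau_deriv \<tau> b + tau_deriv \<tau> D) + \<tau> D"
  unfolding defect_bound_def by (rule min.cobounded1, rule min.cobounded2)

lemma defect_bound_nonneg:
  assumes "0 \<le> D" "0 \<le> b" shows "0 \<le> defect_bound D b"
  unfolding defect_bound_def
  using assms tau_deriv_nonneg[of D] tau_deriv_nonneg[of b] tau_nonneg[of D]
  by (intro min.boundedI add_nonneg_nonneg mult_nonneg_nonneg) auto

lemma defect_bound_div_tau_le:
  assumes "1 \<le> D" "0 \<le> b" shows "defect_bound D b / \<tau> D \<le> tau_deriv \<tau> b / \<tau> 1 + 5"
proof -
  have pos: "0 < D" "0 < \<tau> D" "0 < \<tau> 1" using tau_pos[of D] tau_pos[of 1] assms by auto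
  have "D \<le> \<tau> D / \<tau> 1" using tau_ge_linear[OF assms(1)] pos by (simp add: le_divide_eq)
  then have "tau_deriv \<tau> b * D \<le> tau_deriv \<tau> b * (\<tau> D / \<tau> 1)"
    using tau_deriv_nonneg assms by (intro mult_left_mono) auto
  moreover have "defect_bound D b \<le> tau_deriv \<tau> b * D + D * tau_deriv \<tau> D + \<tau> D"
    using defect_bound_le'[of D b] by (simp add: algebra_simps)
  ultimately have "defect_bound D b \<le> tau_deriv \<tau> b * (\<tau> D / \<tau> 1) + 4 * \<tau> D + \<tau> D"
    using tau_deriv_le_tau[OF pos(1)] by linarith
  also have "\<dots> = (tau_deriv \<tau> b / \<tau> 1 + 5) * \<tau> D" by (simp add: algebra_simps)
  finally show ?thesis using pos by (simp add: divide_le_eq)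
qed

lemma defect_bound_div_tau_tendsto_0:
  assumes "0 \<le> b" shows "((\<lambda>D. defect_bound D b / \<tau> D) \<longlongrightarrow> 0) at_top"
proof -
  define C where "C = 4 * b + b * tau_deriv \<tau> b / \<tau> 1"
  have "\<forall>\<^sub>F D in at_top. 0 \<le> defect_bound D b / \<tau> D"
    using eventually_ge_at_top[of 0]
    by eventually_elim (use assms in \<open>auto intro!: divide_nonneg_nonneg defect_bound_nonneg tau_nonneg\<close>)
  moreover have "\<forall>\<^sub>F D in at_top. defect_bound D b / \<tau> D \<le> C / D"
    using eventually_ge_at_top[of 1]
  proof eventually_elim
    case (elim D)
    have pos: "0 < D" "0 < \<tau> D" "0 < \<tau> 1" using tau_pos[of D] tau_pos[of 1] elim by auto
    have "D * defect_bound D b \<le> D * (b * (tau_deriv \<tau> D + tau_deriv \<tau> b))"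
      using defect_bound_le pos by (intro mult_left_mono) auto
    also have "\<dots> = b * (D * tau_deriv \<tau> D) + b * tau_deriv \<tau> b * D" by (simp add: algebra_simps)
    also have "\<dots> \<le> b * (4 * \<tau> D) + b * tau_deriv \<tau> b * (\<tau> D / \<tau> 1)"
    proof (rule add_mono)
      show "b * (D * tau_deriv \<tau> D) \<le> b * (4 * \<tau> D)"
        using tau_deriv_le_tau[OF pos(1)] assms by (rule mult_left_mono)
      have "D \<le> \<tau> D / \<tau> 1" using tau_ge_linear[OF elim] pos by (simp add: le_divide_eq)
      then show "b * tau_deriv \<tau> b * D \<le> b * tau_deriv \<tau> b * (\<tau> D / \<tau> 1)"
        using tau_deriv_nonneg[of b] assms by (intro mult_left_mono) auto
    qed
    also have "\<dots> = C * \<tau> D" by (simp add: C_def algebra_simps)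
    finally show ?case using pos by (simp add: field_simps)
  qed
  moreover have "((\<lambda>D. C / D) \<longlongrightarrow> 0) at_top"
    by (rule tendsto_divide_0[OF tendsto_const filterlim_ident[THEN filterlim_at_top_imp_at_infinity]])
  ultimately show ?thesis by (rule tendsto_sandwich[OF _ _ tendsto_const])
qed

lemma tau_deriv_shift_tendsto:
  assumes "0 \<le> b" shows "((\<lambda>x. tau_deriv \<tau> (b + \<bar>inverse x\<bar>)) \<longlongrightarrow> tau_deriv \<tau> b) at_top"
proof -
  have "((\<lambda>x. tau_deriv \<tau> (b + inverse x)) \<longlongrightarrow> tau_deriv \<tau> b) at_top"
    using tau_deriv_right_continuous[OF assms]
    unfolding filterlim_at_right_to_0[of _ _ b] filterlim_at_right_to_top by (simp add: add.commute)
  moreover have "\<forall>\<^sub>F x in at_top. tau_deriv \<tau> (b + inverse x) = tau_deriv \<tau> (b + \<bar>inverse x\<bar>)"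
    using eventually_gt_at_top[of 0] by eventually_elim simp
  ultimately show ?thesis by (rule tendsto_cong[THEN iffD1, rotated])
qed

lemma tau_deriv_shift_le:
  assumes "0 \<le> b" "0 \<le> c" "c \<le> 1" shows "tau_deriv \<tau> (b + c) \<le> tau_deriv \<tau> b + tau_deriv \<tau> 1"
  using tau_deriv_subadditive[of b c] tau_deriv_mono[of c 1] assms by linarith

end

lemma borel_measurable_mono_on_comp:
  fixes f :: "real \<Rightarrow> real"
  assumes "mono_on {0..} f" "g \<in> borel_measurable M" "\<And>x. 0 \<le> g x"
  shows "(\<lambda>x. f (g x)) \<in> borel_measurable M"
proof -
  have "mono (\<lambda>x. f (max 0 x))" using assms(1) by (intro monoI) (auto simp: mono_on_def)
  then have "(\<lambda>x. f (max 0 x)) \<in> borel_measurable borel" by (rule borel_measurable_mono)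
  from measurable_compose[OF assms(2) this] show ?thesis using assms(3) by (simp add: max_absorb2)
qed

lemma ereal_INF_SUP_tendsto_if_uniformly_close:
  fixes f :: "'a \<Rightarrow> real" and A :: "'i \<Rightarrow> 'a set"
  assumes nonempty: "\<And>i. A i \<noteq> {}"
    and close: "\<And>\<epsilon>. 0 < \<epsilon> \<Longrightarrow> eventually (\<lambda>i. \<forall>x\<in>A i. \<bar>f x - c\<bar> < \<epsilon>) F"
  shows "((\<lambda>i. INF x\<in>A i. ereal (f x)) \<longlongrightarrow> ereal c) F"
    and "((\<lambda>i. SUP x\<in>A i. ereal (f x)) \<longlongrightarrow> ereal c) F"
proof -
  have lower: "eventually (\<lambda>i. a < (INF x\<in>A i. ereal (f x))) F" if "a < ereal c" for a
  proof -
    obtain z where z: "a < ereal z" "z < c" using \<open>a < ereal c\<close> ereal_dense2 by fastforce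
    show ?thesis using close[of "c - z"] z
      by (auto elim!: eventually_mono intro!: less_le_trans[OF z(1)] INF_greatest)
  qed
  have upper: "eventually (\<lambda>i. (SUP x\<in>A i. ereal (f x)) < a) F" if "ereal c < a" for a
  proof -
    obtain z where z: "ereal z < a" "c < z" using \<open>ereal c < a\<close> ereal_dense2 by fastforce
    show ?thesis using close[of "z - c"] z
      by (auto elim!: eventually_mono intro!: le_less_trans[OF _ z(1)] SUP_least)
  qed
  have INF_le_SUP: "(INF x\<in>A i. ereal (f x)) \<le> (SUP x\<in>A i. ereal (f x))" for i
    using nonempty by (rule INF_le_SUP)
  show "((\<lambda>i. INF x\<in>A i. ereal (f x)) \<longlongrightarrow> ereal c) F"
  proof (rule order_tendstoI)
    fix a assume "ereal c < a"
    from upper[OF this] show "\<forall>\<^sub>F i in F. (INF x\<in>A i. ereal (f x)) < a"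
      by eventually_elim (rule le_less_trans[OF INF_le_SUP])
  qed (rule lower)
  show "((\<lambda>i. SUP x\<in>A i. ereal (f x)) \<longlongrightarrow> ereal c) F"
  proof (rule order_tendstoI)
    fix a assume "a < ereal c"
    from lower[OF this] show "\<forall>\<^sub>F i in F. a < (SUP x\<in>A i. ereal (f x))"
      by eventually_elim (rule less_le_trans[OF _ INF_le_SUP])
  qed (rule upper)
qed

lemma Liminf_Limsup_outside_balls:
  fixes f :: "'a::metric_space \<Rightarrow> real"
  assumes unbounded: "\<not> bounded (UNIV :: 'a set)"
    and lim: "(f \<longlongrightarrow> c) (filtercomap (\<lambda>q. dist q p) at_top)"
  shows "Liminf at_top (\<lambda>r. INF q\<in>UNIV - ball o' r. ereal (f q)) = ereal c"
    and "Limsup at_top (\<lambda>r. SUP q\<in>UNIV - ball o' r. ereal (f q)) = ereal c"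
proof -
  have nonempty: "UNIV - ball o' r \<noteq> {}" for r
  proof -
    obtain y where "r < dist o' y" using unbounded unfolding bounded_def by (meson not_le)
    then have "y \<in> UNIV - ball o' r" by simp
    then show ?thesis by blast
  qed
  have "eventually (\<lambda>r. \<forall>q\<in>UNIV - ball o' r. \<bar>f q - c\<bar> < \<epsilon>) at_top" if "0 < \<epsilon>" for \<epsilon>
  proof -
    obtain N where N: "\<And>q. N \<le> dist q p \<Longrightarrow> \<bar>f q - c\<bar> < \<epsilon>"
      using tendstoD[OF lim \<open>0 < \<epsilon>\<close>]
      by (auto simp: eventually_filtercomap_at_top_linorder dist_real_def)
    show ?thesis
      using eventually_ge_at_top[of "N + dist o' p"]
    proof eventually_elim
      case (elim r)
      show ?case
      proof
        fix q assume "q \<in> UNIV - ball o' r"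
        then have "r \<le> dist o' q" by simp
        moreover have "dist o' q \<le> dist o' p + dist q p" using dist_triangle[of o' q p] by (simp add: dist_commute)
        ultimately show "\<bar>f q - c\<bar> < \<epsilon>" using elim N by simp
      qed
    qed
  qed
  note tendsto = ereal_INF_SUP_tendsto_if_uniformly_close[OF nonempty this]
  show "Liminf at_top (\<lambda>r. INF q\<in>UNIV - ball o' r. ereal (f q)) = ereal c"
    by (rule lim_imp_Liminf[OF trivial_limit_at_top_linorder tendsto(1)])
  show "Limsup at_top (\<lambda>r. SUP q\<in>UNIV - ball o' r. ereal (f q)) = ereal c"
    by (rule lim_imp_Limsup[OF trivial_limit_at_top_linorder tendsto(2)])
qed

locale S0_plus_moment = S0_plus_function \<tau> + prob_space M
  for \<tau> :: "real \<Rightarrow> real" and M :: "'b measure" +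
  fixes Y :: "'b \<Rightarrow> 'a::metric_space" and o' :: 'a
  assumes Y_measurable: "Y \<in> measurable M borel"
    and moment_finite: "(\<integral>\<^sup>+ \<omega>. ennreal (tau_deriv \<tau> (dist (Y \<omega>) o')) \<partial>M) < \<infinity>"
begin

lemma measurable_dist_Y [measurable]: "(\<lambda>\<omega>. dist (Y \<omega>) q) \<in> borel_measurable M"
proof -
  have "(\<lambda>x. dist x q) \<in> borel_measurable borel"
    by (intro borel_measurable_continuous_onI continuous_intros)
  from measurable_compose[OF Y_measurable this] show ?thesis .
qed

lemma measurable_tau_dist_Y [measurable]: "(\<lambda>\<omega>. \<tau> (dist (Y \<omega>) q)) \<in> borel_measurable M"
  by (rule borel_measurable_mono_on_comp[OF _ measurable_dist_Y]) (auto simp: mono_on_def tau_mono)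

lemma measurable_tau_deriv_dist_Y_plus:
  "0 \<le> c \<Longrightarrow> (\<lambda>\<omega>. tau_deriv \<tau> (dist (Y \<omega>) q + c)) \<in> borel_measurable M"
  using borel_measurable_mono_on_comp[of "\<lambda>x. tau_deriv \<tau> (x + c)", OF _ measurable_dist_Y]
  by (auto simp: mono_on_def tau_deriv_mono)

lemma measurable_tau_deriv_dist_Y [measurable]:
  "(\<lambda>\<omega>. tau_deriv \<tau> (dist (Y \<omega>) q)) \<in> borel_measurable M"
  using measurable_tau_deriv_dist_Y_plus[of 0] by simp

text \<open>Finiteness of the moment at \<open>o'\<close> propagates to every centre and shift by subadditivity of \<open>\<tau>'\<close>.\<close>
lemma integrable_tau_deriv_dist_Y_plus:
  assumes "0 \<le> c" shows "integrable M (\<lambda>\<omega>. tau_deriv \<tau> (dist (Y \<omega>) p + c))"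
proof (rule Bochner_Integration.integrable_bound)
  have "integrable M (\<lambda>\<omega>. tau_deriv \<tau> (dist (Y \<omega>) o'))"
    using moment_finite tau_deriv_nonneg by (simp add: integrable_iff_bounded)
  then show "integrable M (\<lambda>\<omega>. tau_deriv \<tau> (dist (Y \<omega>) o') + tau_deriv \<tau> (dist o' p) + tau_deriv \<tau> c)"
    by simp
  show "(\<lambda>\<omega>. tau_deriv \<tau> (dist (Y \<omega>) p + c)) \<in> borel_measurable M"
    by (rule measurable_tau_deriv_dist_Y_plus[OF assms])
  show "AE \<omega> in M. norm (tau_deriv \<tau> (dist (Y \<omega>) p + c))
      \<le> norm (tau_deriv \<tau> (dist (Y \<omega>) o') + tau_deriv \<tau> (dist o' p) + tau_deriv \<tau> c)"
  proof (rule AE_I2)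
    fix \<omega>
    have "tau_deriv \<tau> (dist (Y \<omega>) p + c) \<le> tau_deriv \<tau> (dist (Y \<omega>) o' + dist o' p + c)"
      using dist_triangle[of "Y \<omega>" p o'] assms by (intro tau_deriv_mono) auto
    also have "\<dots> \<le> tau_deriv \<tau> (dist (Y \<omega>) o' + dist o' p) + tau_deriv \<tau> c"
      using assms by (intro tau_deriv_subadditive) auto
    also have "\<dots> \<le> tau_deriv \<tau> (dist (Y \<omega>) o') + tau_deriv \<tau> (dist o' p) + tau_deriv \<tau> c"
      using tau_deriv_subadditive[of "dist (Y \<omega>) o'" "dist o' p"] by simp
    finally show "norm (tau_deriv \<tau> (dist (Y \<omega>) p + c))
      \<le> norm (tau_deriv \<tau> (dist (Y \<omega>) o') + tau_deriv \<tau> (dist o' p) + tau_deriv \<tau> c)"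
      using tau_deriv_nonneg[of "dist (Y \<omega>) p + c"] assms by simp
  qed
qed

lemma integrable_tau_deriv_dist_Y: "integrable M (\<lambda>\<omega>. tau_deriv \<tau> (dist (Y \<omega>) p))"
  using integrable_tau_deriv_dist_Y_plus[of 0] by simp

lemma abs_dist_Y_diff_le: "\<bar>dist (Y \<omega>) q - dist (Y \<omega>) p\<bar> \<le> dist q p"
  using dist_triangle3[of "Y \<omega>" q p] dist_triangle3[of "Y \<omega>" p q] by (simp add: dist_commute abs_le_iff)

lemma abs_dist_Y_minus_dist_le: "\<bar>dist (Y \<omega>) q - dist q p\<bar> \<le> dist (Y \<omega>) p"
  using dist_triangle[of "Y \<omega>" q p] dist_triangle[of q p "Y \<omega>"] by (simp add: dist_commute abs_le_iff)

lemma integrable_tau_dist_Y_diff: "integrable M (\<lambda>\<omega>. \<tau> (dist (Y \<omega>) q) - \<tau> (dist (Y \<omega>) p))"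
proof (rule Bochner_Integration.integrable_bound)
  show "integrable M (\<lambda>\<omega>. dist q p * (tau_deriv \<tau> (dist (Y \<omega>) p) + tau_deriv \<tau> (dist q p)))"
    using integrable_tau_deriv_dist_Y by simp
  show "AE \<omega> in M. norm (\<tau> (dist (Y \<omega>) q) - \<tau> (dist (Y \<omega>) p))
      \<le> norm (dist q p * (tau_deriv \<tau> (dist (Y \<omega>) p) + tau_deriv \<tau> (dist q p)))"
  proof (rule AE_I2)
    fix \<omega>
    have "\<bar>\<tau> (dist (Y \<omega>) q) - \<tau> (dist (Y \<omega>) p)\<bar> \<le> dist q p * (tau_deriv \<tau> (dist (Y \<omega>) p) + tau_deriv \<tau> (dist q p))"
      using abs_dist_Y_diff_le by (intro abs_tau_diff_le) auto
    then show "norm (\<tau> (dist (Y \<omega>) q) - \<tau> (dist (Y \<omega>) p))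
      \<le> norm (dist q p * (tau_deriv \<tau> (dist (Y \<omega>) p) + tau_deriv \<tau> (dist q p)))"
      by (metis abs_ge_self order_trans real_norm_def)
  qed
qed measurable

definition excess :: "'a \<Rightarrow> 'a \<Rightarrow> real" where
  "excess q p = (\<integral>\<omega>. \<tau> (dist (Y \<omega>) q) - \<tau> (dist (Y \<omega>) p) \<partial>M)"

lemma integrable_defect_bound:
  assumes "0 \<le> D" shows "integrable M (\<lambda>\<omega>. defect_bound D (dist (Y \<omega>) p))"
proof (rule Bochner_Integration.integrable_bound)
  show "integrable M (\<lambda>\<omega>. D * (tau_deriv \<tau> (dist (Y \<omega>) p) + tau_deriv \<tau> D) + \<tau> D)"
    using integrable_tau_deriv_dist_Y by simp
  show "AE \<omega> in M. norm (defect_bound D (dist (Y \<omega>) p))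
      \<le> norm (D * (tau_deriv \<tau> (dist (Y \<omega>) p) + tau_deriv \<tau> D) + \<tau> D)"
    using defect_bound_le' defect_bound_nonneg[OF assms]
    by (intro AE_I2) (metis abs_ge_self abs_of_nonneg order_trans real_norm_def zero_le_dist)
qed (unfold defect_bound_def, measurable)

lemma integral_defect_bound_div_tau_tendsto_0:
  "((\<lambda>D. (\<integral>\<omega>. defect_bound D (dist (Y \<omega>) p) \<partial>M) / \<tau> D) \<longlongrightarrow> 0) at_top"
proof -
  have "((\<lambda>D. \<integral>\<omega>. defect_bound D (dist (Y \<omega>) p) / \<tau> D \<partial>M) \<longlongrightarrow> (\<integral>\<omega>. 0 \<partial>M)) at_top"
  proof (rule integral_dominated_convergence_at_top
      [where w = "\<lambda>\<omega>. tau_deriv \<tau> (dist (Y \<omega>) p) / \<tau> 1 + 5"])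
    show "(\<lambda>\<omega>. defect_bound D (dist (Y \<omega>) p) / \<tau> D) \<in> borel_measurable M" for D
      unfolding defect_bound_def by measurable
    show "integrable M (\<lambda>\<omega>. tau_deriv \<tau> (dist (Y \<omega>) p) / \<tau> 1 + 5)"
      using integrable_tau_deriv_dist_Y by simp
    show "AE \<omega> in M. ((\<lambda>D. defect_bound D (dist (Y \<omega>) p) / \<tau> D) \<longlongrightarrow> 0) at_top"
      by (intro AE_I2 defect_bound_div_tau_tendsto_0) simp
    show "\<forall>\<^sub>F D in at_top. AE \<omega> in M.
        norm (defect_bound D (dist (Y \<omega>) p) / \<tau> D) \<le> tau_deriv \<tau> (dist (Y \<omega>) p) / \<tau> 1 + 5"
      using eventually_ge_at_top[of 1]
      by eventually_elim
        (auto intro!: AE_I2 simp: defect_bound_div_tau_le defect_bound_nonneg tau_nonneg)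
  qed simp
  then show ?thesis by simp
qed

lemma abs_excess_div_tau_minus_1_le:
  assumes "1 \<le> dist q p"
  shows "\<bar>excess q p / \<tau> (dist q p) - 1\<bar> \<le> (\<integral>\<omega>. defect_bound (dist q p) (dist (Y \<omega>) p) \<partial>M) / \<tau> (dist q p)"
proof -
  define D where "D = dist q p"
  have D: "1 \<le> D" using assms by (simp add: D_def)
  then have tau_D: "0 < \<tau> D" using tau_pos[of D] by simp
  define h where "h \<omega> = \<tau> (dist (Y \<omega>) q) - \<tau> (dist (Y \<omega>) p) - \<tau> D" for \<omega>
  have h_integrable: "integrable M h"
    unfolding h_def using integrable_tau_dist_Y_diff by simp
  have "excess q p - \<tau> D = integral\<^sup>L M h"
    unfolding excess_def h_def using integrable_tau_dist_Y_diff by (simp add: prob_space)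
  then have "\<bar>excess q p - \<tau> D\<bar> \<le> (\<integral>\<omega>. \<bar>h \<omega>\<bar> \<partial>M)"
    using integral_norm_bound[of M h] by simp
  also have "\<dots> \<le> (\<integral>\<omega>. defect_bound D (dist (Y \<omega>) p) \<partial>M)"
  proof (rule integral_mono)
    show "integrable M (\<lambda>\<omega>. defect_bound D (dist (Y \<omega>) p))"
      using D by (intro integrable_defect_bound) simp
    show "\<bar>h \<omega>\<bar> \<le> defect_bound D (dist (Y \<omega>) p)" for \<omega>
      unfolding h_def D_def using abs_dist_Y_diff_le abs_dist_Y_minus_dist_le
      by (intro abs_tau_defect_le_defect_bound) auto
  qed (use h_integrable in auto)
  finally have "\<bar>excess q p - \<tau> D\<bar> / \<tau> D \<le> (\<integral>\<omega>. defect_bound D (dist (Y \<omega>) p) \<partial>M) / \<tau> D"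
    using tau_D by (intro divide_right_mono) auto
  moreover have "excess q p / \<tau> D - 1 = (excess q p - \<tau> D) / \<tau> D" using tau_D by (simp add: field_simps)
  ultimately show ?thesis using tau_D by (simp add: abs_divide D_def[symmetric])
qed

lemma excess_div_tau_tendsto_1: "((\<lambda>q. excess q p / \<tau> (dist q p)) \<longlongrightarrow> 1) (filtercomap (\<lambda>q. dist q p) at_top)"
proof -
  let ?G = "\<lambda>D. (\<integral>\<omega>. defect_bound D (dist (Y \<omega>) p) \<partial>M) / \<tau> D"
  have "((\<lambda>q. ?G (dist q p)) \<longlongrightarrow> 0) (filtercomap (\<lambda>q. dist q p) at_top)"
    using integral_defect_bound_div_tau_tendsto_0 filterlim_filtercomap by (rule filterlim_compose)
  moreover have "\<forall>\<^sub>F q in filtercomap (\<lambda>q. dist q p) at_top. norm (excess q p / \<tau> (dist q p) - 1) \<le> ?G (dist q p)"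
    unfolding eventually_filtercomap_at_top_linorder using abs_excess_div_tau_minus_1_le by (intro exI[of _ 1]) simp
  ultimately have "((\<lambda>q. excess q p / \<tau> (dist q p) - 1) \<longlongrightarrow> 0) (filtercomap (\<lambda>q. dist q p) at_top)"
    by (rule Lim_null_comparison[rotated])
  then show ?thesis by (simp add: Lim_null[of _ 1])
qed

lemma excess_div_dist_le:
  assumes "0 < dist q p" "dist q p \<le> r"
  shows "excess q p / dist q p \<le> (\<integral>\<omega>. tau_deriv \<tau> (dist (Y \<omega>) p + r) \<partial>M)"
proof -
  have "excess q p \<le> (\<integral>\<omega>. dist q p * tau_deriv \<tau> (dist (Y \<omega>) p + r) \<partial>M)"
    unfolding excess_def
  proof (rule integral_mono[OF integrable_tau_dist_Y_diff])
    show "integrable M (\<lambda>\<omega>. dist q p * tau_deriv \<tau> (dist (Y \<omega>) p + r))"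
      using integrable_tau_deriv_dist_Y_plus[of r] assms by simp
    fix \<omega>
    have "\<tau> (dist (Y \<omega>) q) - \<tau> (dist (Y \<omega>) p) \<le> dist q p * tau_deriv \<tau> (dist (Y \<omega>) p + dist q p)"
      using abs_dist_Y_diff_le by (intro tau_increase_le) auto
    also have "\<dots> \<le> dist q p * tau_deriv \<tau> (dist (Y \<omega>) p + r)"
      using assms by (intro mult_left_mono tau_deriv_mono) auto
    finally show "\<tau> (dist (Y \<omega>) q) - \<tau> (dist (Y \<omega>) p) \<le> dist q p * tau_deriv \<tau> (dist (Y \<omega>) p + r)" .
  qed
  then show ?thesis using assms(1) by (simp add: pos_divide_le_eq mult.commute)
qed

lemma integral_tau_deriv_dist_Y_plus_tendsto:
  "((\<lambda>r. \<integral>\<omega>. tau_deriv \<tau> (dist (Y \<omega>) p + r) \<partial>M) \<longlongrightarrow> (\<integral>\<omega>. tau_deriv \<tau> (dist (Y \<omega>) p) \<partial>M)) (at_right 0)"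
  unfolding filterlim_at_right_to_top
proof -
  \<comment> \<open>the absolute value keeps the argument of \<open>\<tau>'\<close> nonnegative for every \<open>x\<close>, as measurability requires\<close>
  have "((\<lambda>x. \<integral>\<omega>. tau_deriv \<tau> (dist (Y \<omega>) p + \<bar>inverse x\<bar>) \<partial>M)
      \<longlongrightarrow> (\<integral>\<omega>. tau_deriv \<tau> (dist (Y \<omega>) p) \<partial>M)) at_top"
  proof (rule integral_dominated_convergence_at_top
      [where w = "\<lambda>\<omega>. tau_deriv \<tau> (dist (Y \<omega>) p) + tau_deriv \<tau> 1"])
    show "(\<lambda>\<omega>. tau_deriv \<tau> (dist (Y \<omega>) p + \<bar>inverse x\<bar>)) \<in> borel_measurable M" for x
      by (rule measurable_tau_deriv_dist_Y_plus) simp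
    show "integrable M (\<lambda>\<omega>. tau_deriv \<tau> (dist (Y \<omega>) p) + tau_deriv \<tau> 1)"
      using integrable_tau_deriv_dist_Y by simp
    show "AE \<omega> in M. ((\<lambda>x. tau_deriv \<tau> (dist (Y \<omega>) p + \<bar>inverse x\<bar>))
        \<longlongrightarrow> tau_deriv \<tau> (dist (Y \<omega>) p)) at_top"
      by (intro AE_I2 tau_deriv_shift_tendsto) simp
    show "\<forall>\<^sub>F x in at_top. AE \<omega> in M.
        norm (tau_deriv \<tau> (dist (Y \<omega>) p + \<bar>inverse x\<bar>)) \<le> tau_deriv \<tau> (dist (Y \<omega>) p) + tau_deriv \<tau> 1"
      using eventually_ge_at_top[of 1]
    proof eventually_elim
      case (elim x)
      have "\<bar>inverse x\<bar> \<le> 1" using elim by (simp add: inverse_le_1_iff)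
      show ?case
      proof (rule AE_I2)
        fix \<omega>
        show "norm (tau_deriv \<tau> (dist (Y \<omega>) p + \<bar>inverse x\<bar>))
            \<le> tau_deriv \<tau> (dist (Y \<omega>) p) + tau_deriv \<tau> 1"
          using tau_deriv_shift_le[of "dist (Y \<omega>) p" "\<bar>inverse x\<bar>"] \<open>\<bar>inverse x\<bar> \<le> 1\<close>
            tau_deriv_nonneg[of "dist (Y \<omega>) p + \<bar>inverse x\<bar>"] by simp
      qed
    qed
  qed measurable
  moreover have "\<forall>\<^sub>F x in at_top. (\<integral>\<omega>. tau_deriv \<tau> (dist (Y \<omega>) p + \<bar>inverse x\<bar>) \<partial>M)
      = (\<integral>\<omega>. tau_deriv \<tau> (dist (Y \<omega>) p + inverse x) \<partial>M)"
    using eventually_gt_at_top[of 0] by eventually_elim simp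
  ultimately show "((\<lambda>x. \<integral>\<omega>. tau_deriv \<tau> (dist (Y \<omega>) p + inverse x) \<partial>M)
      \<longlongrightarrow> (\<integral>\<omega>. tau_deriv \<tau> (dist (Y \<omega>) p) \<partial>M)) at_top"
    by (rule tendsto_cong[THEN iffD1, rotated])
qed

lemma Limsup_excess_div_dist_le:
  "Limsup (at_right 0) (\<lambda>r. SUP q\<in>ball p r - {p}. ereal (excess q p / dist q p))
    \<le> ereal (\<integral>\<omega>. tau_deriv \<tau> (dist (Y \<omega>) p) \<partial>M)"
proof -
  have "Limsup (at_right 0) (\<lambda>r. SUP q\<in>ball p r - {p}. ereal (excess q p / dist q p))
      \<le> Limsup (at_right 0) (\<lambda>r. ereal (\<integral>\<omega>. tau_deriv \<tau> (dist (Y \<omega>) p + r) \<partial>M))"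
    using excess_div_dist_le
    by (intro Limsup_mono always_eventually allI SUP_least) (auto simp: dist_commute)
  also have "\<dots> = ereal (\<integral>\<omega>. tau_deriv \<tau> (dist (Y \<omega>) p) \<partial>M)"
    by (intro lim_imp_Limsup trivial_limit_at_right_real tendsto_ereal
        integral_tau_deriv_dist_Y_plus_tendsto)
  finally show ?thesis .
qed

end

theorem mainTheorem4:
  fixes M :: "'b measure" and Y :: "'b \<Rightarrow> 'a::metric_space"
    and o' p :: 'a and \<tau> :: "real \<Rightarrow> real"
  assumes "prob_space M"
    and "Y \<in> measurable M borel"
    and "\<tau> \<in> S0_plus"
    and "(\<integral>\<^sup>+ \<omega>. ennreal (tau_deriv \<tau> (dist (Y \<omega>) o')) \<partial>M) < \<infinity>"
  shows "(\<not> bounded (UNIV :: 'a set) \<longrightarrow>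
           Liminf at_top (\<lambda>r. INF q\<in>UNIV - ball o' r.
              ereal ((\<integral>\<omega>. \<tau> (dist (Y \<omega>) q) - \<tau> (dist (Y \<omega>) p) \<partial>M) / \<tau> (dist q p))) = 1
         \<and> Limsup at_top (\<lambda>r. SUP q\<in>UNIV - ball o' r.
              ereal ((\<integral>\<omega>. \<tau> (dist (Y \<omega>) q) - \<tau> (dist (Y \<omega>) p) \<partial>M) / \<tau> (dist q p))) = 1)
       \<and> (p islimpt (UNIV :: 'a set) \<longrightarrow>
           Limsup (at_right 0) (\<lambda>r. SUP q\<in>ball p r - {p}.
              ereal ((\<integral>\<omega>. \<tau> (dist (Y \<omega>) q) - \<tau> (dist (Y \<omega>) p) \<partial>M) / dist q p))
           \<le> ereal (\<integral>\<omega>. tau_deriv \<tau> (dist (Y \<omega>) p) \<partial>M))"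
proof -
  interpret S0_plus_moment \<tau> M Y o'
    using assms by (intro S0_plus_moment.intro S0_plus_function.intro S0_plus_moment_axioms.intro)
  \<comment> \<open>Part (ii) holds without the accumulation hypothesis: for isolated \<open>p\<close> the suprema are eventually \<open>-\<infinity>\<close>.\<close>
  note far = Liminf_Limsup_outside_balls[where o' = o' and p = p, OF _ excess_div_tau_tendsto_1]
  show ?thesis
    using far Limsup_excess_div_dist_le unfolding excess_def by (simp add: one_ereal_def)
qed

end
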